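(* Let $U$ be an $N\times N$ unitary matrix with no zero entries, let $S,T$ be $N\times N$ enphased permutation matrices, and let $V=SUT^{-1}$. Write $S=D_S\Pi_S$ and $T=D_T\Pi_T$ with $D_S,D_T$ unitary diagonal and $\Pi_S,\Pi_T$ permutation matrices. Then: (a) $\mathcal I_V=\Phi_{\Pi_S,\Pi_T}\,\mathcal I_U\,\Phi_{\Pi_S,\Pi_T}^{-1}$, i.e. $\mathcal I_U$ and $\mathcal I_V$ are similar with similarity operator $\Phi_{\Pi_S,\Pi_T}$; (b) the operators $\mathcal J_U=\mathcal C_U\mathcal D_U^{-1}$ and $\mathcal J_V=\mathcal C_V\mathcal D_V^{-1}$ satisfy $\mathcal J_V=\Phi_{S,S}\,\mathcal J_U\,\Phi_{S,S}^{-1}$.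
   Context: An enphased permutation matrix is a product of a permutation matrix and a unitary diagonal matrix; such a factorization $S=D\Pi$ is unique. $\circ$ denotes the entrywise (Hadamard) product and $X^*$ the conjugate transpose. For an $N\times N$ unitary $W$ with no zero entries, the linear operators $\mathcal C_W,\mathcal D_W$ on $\mathbb C^{N\times N}$ are $\mathcal C_W(F)=(F\circ W)W^*$ and $\mathcal D_W(F)=W(\overline F\circ W)^*$; both are invertible, and $\mathcal I_W=\mathcal C_W^{-1}\mathcal D_W$ (the Berezin transform). For matrices $A,B$ with $B$ invertible, $\Phi_{A,B}$ is the operator $X\mapsto AXB^{-1}$ on $\mathbb C^{N\times N}$. *)

theory Defs
  imports "HOL-Analysis.Analysis"
begin

type_synonym 'n cmat = "complex^'n^'n"

definition adjoint_mat :: "'n::finite cmat \<Rightarrow> 'n cmat" where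
  "adjoint_mat A = (\<chi> i j. cnj (A $ j $ i))"

definition conj_mat :: "'n::finite cmat \<Rightarrow> 'n cmat" where
  "conj_mat A = (\<chi> i j. cnj (A $ i $ j))"

definition hadamard :: "'n::finite cmat \<Rightarrow> 'n cmat \<Rightarrow> 'n cmat" where
  "hadamard A B = (\<chi> i j. A $ i $ j * B $ i $ j)"

definition unitary_mat :: "'n::finite cmat \<Rightarrow> bool" where
  "unitary_mat U \<longleftrightarrow> U ** adjoint_mat U = mat 1 \<and> adjoint_mat U ** U = mat 1"

definition no_zero_entries :: "'n::finite cmat \<Rightarrow> bool" where
  "no_zero_entries U \<longleftrightarrow> (\<forall>i j. U $ i $ j \<noteq> 0)"

definition permutation_mat :: "'n::finite cmat \<Rightarrow> bool" where
  "permutation_mat P \<longleftrightarrow> (\<exists>p. p permutes (UNIV :: 'n set) \<and>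
      P = (\<chi> i j. if i = p j then 1 else 0))"

definition unitary_diag_mat :: "'n::finite cmat \<Rightarrow> bool" where
  "unitary_diag_mat D \<longleftrightarrow> (\<exists>d. (\<forall>i. norm (d i) = 1) \<and>
      D = (\<chi> i j. if i = j then d i else 0))"

definition enphased_perm_mat :: "'n::finite cmat \<Rightarrow> bool" where
  "enphased_perm_mat S \<longleftrightarrow> (\<exists>D P. unitary_diag_mat D \<and> permutation_mat P \<and> S = D ** P)"

definition C_op :: "'n::finite cmat \<Rightarrow> 'n cmat \<Rightarrow> 'n cmat" where
  "C_op W F = hadamard F W ** adjoint_mat W"

definition D_op :: "'n::finite cmat \<Rightarrow> 'n cmat \<Rightarrow> 'n cmat" where
  "D_op W F = W ** adjoint_mat (hadamard (conj_mat F) W)"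

definition I_op :: "'n::finite cmat \<Rightarrow> 'n cmat \<Rightarrow> 'n cmat" where
  "I_op W = inv (C_op W) \<circ> D_op W"

definition J_op :: "'n::finite cmat \<Rightarrow> 'n cmat \<Rightarrow> 'n cmat" where
  "J_op W = C_op W \<circ> inv (D_op W)"

definition Phi_op :: "'n::finite cmat \<Rightarrow> 'n cmat \<Rightarrow> 'n cmat \<Rightarrow> 'n cmat" where
  "Phi_op A B X = A ** X ** matrix_inv B"

end

theory Submission
  imports Defs
begin

text \<open>With \<open>S = D\<^sub>S\<Pi>\<^sub>S\<close> and \<open>T = D\<^sub>T\<Pi>\<^sub>T\<close> (permutations \<open>p\<close>, \<open>q\<close>),
  both \<open>\<C>\<^sub>W\<close> and \<open>\<D>\<^sub>W\<close> only see \<open>W\<close> through the row products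
  \<open>\<Sum>\<^sub>j g\<^sub>j W\<^sub>i\<^sub>j conj(W\<^sub>k\<^sub>j)\<close>. For \<open>V = SUT\<^sup>-\<^sup>1\<close> the column phases of \<open>T\<close>
  cancel in these products, the column permutation \<open>q\<close> is absorbed by reindexing the sum,
  and the row phases and permutation of \<open>S\<close> factor out as conjugation by \<open>S\<close>. Hence
  \<open>\<C>\<^sub>V \<Phi>\<^sub>\<Pi>\<^sub>S\<^sub>,\<^sub>\<Pi>\<^sub>T = \<Phi>\<^sub>S\<^sub>,\<^sub>S \<C>\<^sub>U\<close> and
  \<open>\<D>\<^sub>V \<Phi>\<^sub>\<Pi>\<^sub>S\<^sub>,\<^sub>\<Pi>\<^sub>T = \<Phi>\<^sub>S\<^sub>,\<^sub>S \<D>\<^sub>U\<close>, and both similarities follow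
  formally: in \<open>\<C>\<^sub>V\<^sup>-\<^sup>1\<D>\<^sub>V\<close> the outer factors \<open>\<Phi>\<^sub>S\<^sub>,\<^sub>S\<close> cancel, in
  \<open>\<C>\<^sub>V\<D>\<^sub>V\<^sup>-\<^sup>1\<close> the inner ones do.\<close>

definition monomial_mat :: "('n::finite \<Rightarrow> 'n) \<Rightarrow> ('n \<Rightarrow> complex) \<Rightarrow> 'n cmat" where
  "monomial_mat p c = (\<chi> i j. if i = p j then c i else 0)"

lemma monomial_mat_mult_nth:
  assumes "p permutes UNIV"
  shows "(monomial_mat p c ** X) $ i $ k = c i * X $ inv p i $ k"
proof -
  have "\<And>j. i = p j \<longleftrightarrow> j = inv p i"
    using permutes_inv_eq[OF assms] by metis
  then show ?thesis
    by (simp add: monomial_mat_def matrix_matrix_mult_def if_distrib if_distribR sum.delta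
        permutes_inverses[OF assms] cong: if_cong)
qed

lemma mult_monomial_mat_nth: "(X ** monomial_mat p c) $ i $ k = X $ i $ p k * c (p k)"
  by (simp add: monomial_mat_def matrix_matrix_mult_def if_distrib if_distribR sum.delta
      cong: if_cong)

lemma permutation_mat_obtain_monomial_mat:
  assumes "permutation_mat P"
  obtains p where "p permutes UNIV" and "P = monomial_mat p (\<lambda>_. 1)"
  using assms unfolding permutation_mat_def monomial_mat_def by auto

lemma unitary_diag_mat_obtain_monomial_mat:
  assumes "unitary_diag_mat D"
  obtains d where "\<And>i. norm (d i) = 1" and "D = monomial_mat id d"
  using assms unfolding unitary_diag_mat_def monomial_mat_def by auto

lemma monomial_mat_id_mult:
  assumes "p permutes UNIV"
  shows "monomial_mat id d ** monomial_mat p c = monomial_mat p (\<lambda>i. d i * c i)"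
  by (simp add: vec_eq_iff monomial_mat_mult_nth[OF permutes_id]) (simp add: monomial_mat_def)

lemma matrix_inv_invertible:
  fixes A :: "'a::semiring_1^'n^'n"
  assumes "invertible A"
  shows "A ** matrix_inv A = mat 1 \<and> matrix_inv A ** A = mat 1"
  using assms unfolding invertible_def matrix_inv_def by (rule someI_ex)

lemma matrix_inv_unique:
  fixes A B :: "'a::field^'n::finite^'n"
  assumes AB: "A ** B = mat 1"
  shows "matrix_inv A = B"
proof -
  have BA: "B ** A = mat 1" using AB matrix_left_right_inverse by blast
  then have "A ** matrix_inv A = mat 1 \<and> matrix_inv A ** A = mat 1"
    using AB by (intro matrix_inv_invertible) (auto simp: invertible_def)
  then have "B = B ** A ** matrix_inv A" by (metis matrix_mul_assoc matrix_mul_rid)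
  then show ?thesis using BA by (simp add: matrix_mul_lid)
qed

lemma monomial_mat_mult_inverse:
  assumes p: "p permutes UNIV" and c: "\<And>i. c i \<noteq> 0"
  shows "monomial_mat p c ** monomial_mat (inv p) (\<lambda>i. inverse (c (p i))) = mat 1"
  using c by (simp add: vec_eq_iff monomial_mat_mult_nth[OF p])
    (auto simp: monomial_mat_def mat_def permutes_inverses[OF p] permutes_inv_eq[OF p])

lemma matrix_inv_monomial_mat:
  assumes "p permutes UNIV" and "\<And>i. c i \<noteq> 0"
  shows "matrix_inv (monomial_mat p c) = monomial_mat (inv p) (\<lambda>i. inverse (c (p i)))"
  using monomial_mat_mult_inverse[where c = c, OF assms] by (rule matrix_inv_unique)

lemma invertible_monomial_mat:
  assumes "p permutes UNIV" and "\<And>i. c i \<noteq> 0"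
  shows "invertible (monomial_mat p c)"
  using monomial_mat_mult_inverse[where c = c, OF assms] invertible_right_inverse by blast

lemma Phi_op_monomial_mat_nth:
  assumes p: "p permutes UNIV" and q: "q permutes UNIV" and c: "\<And>i. c i \<noteq> 0"
  shows "Phi_op (monomial_mat p d) (monomial_mat q c) X $ i $ k
           = d i * X $ inv p i $ inv q k * inverse (c k)"
  by (simp add: Phi_op_def matrix_inv_monomial_mat[where c = c, OF q c] mult_monomial_mat_nth
      monomial_mat_mult_nth[OF p] permutes_inverses[OF q])

lemma mult_cnj_eq_1: "norm (z::complex) = 1 \<Longrightarrow> z * cnj z = 1"
  by (metis complex_norm_square mult_1 of_real_1 power_one)

lemma cnj_eq_inverse: "norm (z::complex) = 1 \<Longrightarrow> cnj z = inverse z"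
  by (metis inverse_unique mult_cnj_eq_1)

lemma sum_Phi_op_monomial_row_products:
  fixes U :: "'n::finite cmat"
  assumes p: "p permutes UNIV" and q: "q permutes UNIV"
    and d: "\<And>i. norm (d i) = 1" and e: "\<And>i. norm (e i) = 1"
  defines "W \<equiv> Phi_op (monomial_mat p d) (monomial_mat q e) U"
  shows "(\<Sum>j\<in>UNIV. g j * (W $ i $ j * cnj (W $ k $ j)))
           = d i * cnj (d k) * (\<Sum>j\<in>UNIV. g (q j) * (U $ inv p i $ j * cnj (U $ inv p k $ j)))"
proof -
  have e0: "e j \<noteq> 0" for j using e[of j] by auto
  have "W $ i $ j * cnj (W $ k $ j)
          = d i * cnj (d k) * (U $ inv p i $ inv q j * cnj (U $ inv p k $ inv q j))
            * (cnj (e j) * e j)" for j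
    by (simp add: W_def Phi_op_monomial_mat_nth[where c = e, OF p q e0]
        cnj_eq_inverse[OF e, symmetric] mult_ac)
  then have "W $ i $ j * cnj (W $ k $ j)
          = d i * cnj (d k) * (U $ inv p i $ inv q j * cnj (U $ inv p k $ inv q j))" for j
    using mult_cnj_eq_1[OF e[of j]] by (simp add: mult.commute)
  then have "(\<Sum>j\<in>UNIV. g j * (W $ i $ j * cnj (W $ k $ j)))
      = d i * cnj (d k) * (\<Sum>j\<in>UNIV. g j * (U $ inv p i $ inv q j * cnj (U $ inv p k $ inv q j)))"
    by (simp add: sum_distrib_left mult.left_commute)
  also have "(\<Sum>j\<in>UNIV. g j * (U $ inv p i $ inv q j * cnj (U $ inv p k $ inv q j)))
      = (\<Sum>j\<in>UNIV. g (q j) * (U $ inv p i $ j * cnj (U $ inv p k $ j)))"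
    by (subst sum.permute[OF q]) (simp add: permutes_inverses[OF q])
  finally show ?thesis .
qed

lemma C_op_nth: "C_op W F $ i $ k = (\<Sum>j\<in>UNIV. F $ i $ j * (W $ i $ j * cnj (W $ k $ j)))"
  by (simp add: C_op_def hadamard_def adjoint_mat_def matrix_matrix_mult_def mult.assoc)

lemma D_op_nth: "D_op W F $ i $ k = (\<Sum>j\<in>UNIV. F $ k $ j * (W $ i $ j * cnj (W $ k $ j)))"
  by (simp add: D_op_def hadamard_def adjoint_mat_def conj_mat_def matrix_matrix_mult_def mult_ac)

lemma
  fixes U :: "'n::finite cmat"
  assumes p: "p permutes UNIV" and q: "q permutes UNIV"
    and d: "\<And>i. norm (d i) = 1" and e: "\<And>i. norm (e i) = 1"
  defines "S \<equiv> monomial_mat p d" and "T \<equiv> monomial_mat q e"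
    and "Phi_perm \<equiv> Phi_op (monomial_mat p (\<lambda>_. 1)) (monomial_mat q (\<lambda>_. 1))"
  shows C_op_Phi_op_monomial: "C_op (Phi_op S T U) (Phi_perm X) = Phi_op S S (C_op U X)"
    and D_op_Phi_op_monomial: "D_op (Phi_op S T U) (Phi_perm X) = Phi_op S S (D_op U X)"
proof -
  have d0: "d i \<noteq> 0" for i using d[of i] by auto
  have Phi_perm_nth: "Phi_perm X $ i $ j = X $ inv p i $ inv q j" for i j
    by (simp add: Phi_perm_def Phi_op_monomial_mat_nth[OF p q])
  have S_nth: "Phi_op (monomial_mat p d) (monomial_mat p d) Y $ i $ k
                 = d i * cnj (d k) * Y $ inv p i $ inv p k" for Y i k
    by (simp add: Phi_op_monomial_mat_nth[where c = d, OF p p d0] cnj_eq_inverse[OF d] mult_ac)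
  show "C_op (Phi_op S T U) (Phi_perm X) = Phi_op S S (C_op U X)"
    by (simp add: vec_eq_iff C_op_nth S_nth Phi_perm_nth S_def T_def
        sum_Phi_op_monomial_row_products[where d = d and e = e, OF p q d e]
        permutes_inverses[OF q])
  show "D_op (Phi_op S T U) (Phi_perm X) = Phi_op S S (D_op U X)"
    by (simp add: vec_eq_iff D_op_nth S_nth Phi_perm_nth S_def T_def
        sum_Phi_op_monomial_row_products[where d = d and e = e, OF p q d e]
        permutes_inverses[OF q])
qed

lemma bij_Phi_op:
  fixes A B :: "'n::finite cmat"
  assumes A: "invertible A" and B: "invertible B"
  shows "bij (Phi_op A B)"
proof (rule o_bij)
  show "(\<lambda>Y. matrix_inv A ** Y ** B) \<circ> Phi_op A B = id"
    using matrix_inv_invertible[OF A] matrix_inv_invertible[OF B]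
    by (simp add: fun_eq_iff Phi_op_def matrix_mul_assoc)
      (metis matrix_mul_assoc matrix_mul_rid)
  show "Phi_op A B \<circ> (\<lambda>Y. matrix_inv A ** Y ** B) = id"
    using matrix_inv_invertible[OF A] matrix_inv_invertible[OF B]
    by (simp add: fun_eq_iff Phi_op_def matrix_mul_assoc)
      (metis matrix_mul_assoc matrix_mul_rid)
qed

lemma hadamard_entrywise_inverse:
  assumes "no_zero_entries U"
  shows "hadamard (hadamard X U) (\<chi> i j. inverse (U $ i $ j)) = X"
    and "hadamard (hadamard X (\<chi> i j. inverse (U $ i $ j))) U = X"
  using assms by (simp_all add: vec_eq_iff hadamard_def no_zero_entries_def)

lemma adjoint_mat_mult: "adjoint_mat (A ** B) = adjoint_mat B ** adjoint_mat A"
  by (simp add: vec_eq_iff adjoint_mat_def matrix_matrix_mult_def mult.commute)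

lemma adjoint_mat_adjoint_mat [simp]: "adjoint_mat (adjoint_mat A) = A"
  by (simp add: vec_eq_iff adjoint_mat_def)

lemma conj_mat_conj_mat [simp]: "conj_mat (conj_mat A) = A"
  by (simp add: vec_eq_iff conj_mat_def)

lemma
  assumes U: "unitary_mat U" and nz: "no_zero_entries U"
  shows bij_C_op: "bij (C_op U)" and bij_D_op: "bij (D_op U)"
proof -
  let ?U' = "\<chi> i j. inverse (U $ i $ j)"
  have UU: "U ** adjoint_mat U = mat 1" "adjoint_mat U ** U = mat 1"
    using U unitary_mat_def by auto
  show "bij (C_op U)"
  proof (rule o_bij)
    show "(\<lambda>G. hadamard (G ** U) ?U') \<circ> C_op U = id"
      by (simp add: fun_eq_iff C_op_def matrix_mul_assoc[symmetric] UU
          hadamard_entrywise_inverse[OF nz])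
    show "C_op U \<circ> (\<lambda>G. hadamard (G ** U) ?U') = id"
      by (simp add: fun_eq_iff C_op_def matrix_mul_assoc[symmetric] UU
          hadamard_entrywise_inverse[OF nz])
  qed
  show "bij (D_op U)"
  proof (rule o_bij)
    show "(\<lambda>H. conj_mat (hadamard (adjoint_mat H ** U) ?U')) \<circ> D_op U = id"
      by (simp add: fun_eq_iff D_op_def adjoint_mat_mult matrix_mul_assoc[symmetric] UU
          hadamard_entrywise_inverse[OF nz])
    show "D_op U \<circ> (\<lambda>H. conj_mat (hadamard (adjoint_mat H ** U) ?U')) = id"
      by (simp add: fun_eq_iff D_op_def adjoint_mat_mult matrix_mul_assoc UU
          hadamard_entrywise_inverse[OF nz])
  qed
qed

lemma
  assumes L: "bij L" and R: "bij R" and C: "bij C" and D: "bij D"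
    and C': "C' \<circ> R = L \<circ> C" and D': "D' \<circ> R = L \<circ> D"
  shows inv_comp_intertwined: "inv C' \<circ> D' = R \<circ> (inv C \<circ> D) \<circ> inv R"
    and comp_inv_intertwined: "C' \<circ> inv D' = L \<circ> (C \<circ> inv D) \<circ> inv L"
proof -
  have "R \<circ> inv R = id"
    using R bij_is_surj surj_iff by blast
  then have "C' = C' \<circ> R \<circ> inv R" "D' = D' \<circ> R \<circ> inv R"
    by (simp_all add: comp_assoc)
  then have C'_eq: "C' = L \<circ> C \<circ> inv R" and D'_eq: "D' = L \<circ> D \<circ> inv R"
    using C' D' by simp_all
  have "inv C' = R \<circ> inv C \<circ> inv L" "inv D' = R \<circ> inv D \<circ> inv L"
    unfolding C'_eq D'_eq using L R C D
    by (simp_all add: o_inv_distrib bij_comp bij_imp_bij_inv inv_inv_eq comp_assoc)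
  moreover have "inv L \<circ> L = id" "inv R \<circ> R = id"
    using L R bij_is_inj inj_iff by blast+
  ultimately show "inv C' \<circ> D' = R \<circ> (inv C \<circ> D) \<circ> inv R"
    and "C' \<circ> inv D' = L \<circ> (C \<circ> inv D) \<circ> inv L"
    unfolding C'_eq D'_eq by (simp_all add: comp_assoc) (simp_all add: o_assoc)
qed

theorem corollary3p5:
  fixes U S T D_S D_T P_S P_T :: "'n::finite cmat"
  assumes "unitary_mat U" and "no_zero_entries U"
    and "enphased_perm_mat S" and "enphased_perm_mat T"
    and "unitary_diag_mat D_S" and "permutation_mat P_S" and "S = D_S ** P_S"
    and "unitary_diag_mat D_T" and "permutation_mat P_T" and "T = D_T ** P_T"
  shows "I_op (S ** U ** matrix_inv T)
           = Phi_op P_S P_T \<circ> I_op U \<circ> inv (Phi_op P_S P_T)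
    \<and> J_op (S ** U ** matrix_inv T)
           = Phi_op S S \<circ> J_op U \<circ> inv (Phi_op S S)"
proof -
  obtain p where p: "p permutes UNIV" and P_S: "P_S = monomial_mat p (\<lambda>_. 1)"
    using assms(6) by (rule permutation_mat_obtain_monomial_mat)
  obtain q where q: "q permutes UNIV" and P_T: "P_T = monomial_mat q (\<lambda>_. 1)"
    using assms(9) by (rule permutation_mat_obtain_monomial_mat)
  obtain d where d: "\<And>i. norm (d i) = 1" and D_S: "D_S = monomial_mat id d"
    using assms(5) unitary_diag_mat_obtain_monomial_mat by blast
  obtain e where e: "\<And>i. norm (e i) = 1" and D_T: "D_T = monomial_mat id e"
    using assms(8) unitary_diag_mat_obtain_monomial_mat by blast
  have S: "S = monomial_mat p d" and T: "T = monomial_mat q e"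
    using assms(7,10) by (simp_all add: D_S P_S D_T P_T monomial_mat_id_mult[OF p]
        monomial_mat_id_mult[OF q])
  have "d i \<noteq> 0" for i using d[of i] by auto
  then have L: "bij (Phi_op S S)" and R: "bij (Phi_op P_S P_T)"
    unfolding S P_S P_T using p q by (simp_all add: bij_Phi_op invertible_monomial_mat)
  have "C_op (Phi_op S T U) \<circ> Phi_op P_S P_T = Phi_op S S \<circ> C_op U"
    and "D_op (Phi_op S T U) \<circ> Phi_op P_S P_T = Phi_op S S \<circ> D_op U"
    unfolding S T P_S P_T comp_def
    by (rule ext, rule C_op_Phi_op_monomial[where d = d and e = e, OF p q d e])
      (rule ext, rule D_op_Phi_op_monomial[where d = d and e = e, OF p q d e])
  note intertwined = L R bij_C_op[OF assms(1,2)] bij_D_op[OF assms(1,2)] this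
  show ?thesis
    unfolding I_op_def J_op_def Phi_op_def[of S T U, symmetric]
    using inv_comp_intertwined[OF intertwined] comp_inv_intertwined[OF intertwined]
    by (rule conjI)
qed

end
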